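(* Let $X,Y$ be spaces and $F\colon\mathcal{K}(X)\to\mathcal{K}(Y)$ a map. Consider the conditions: (1) if $K,L\in\mathcal{K}(X)$ and $K\subset L$, then $F(K)\subset F(L)$; (2) for each $L\in\mathcal{K}(Y)$ there is $K\in\mathcal{K}(X)$ with $L\subset F(K)$; $(2)_c$ for each countable $L\in\mathcal{K}(Y)$ there is $K\in\mathcal{K}(X)$ with $L\subset F(K)$; $(3)_c$ if $U\subset X$ and $V\subset Y$ are non-empty open sets such that for each countable compact $L\subset V$ there is a compact $K\subset U$ with $L\subset F(K)$, then for any open cover $\mathcal{W}$ of $U$ and any $y\in V$ there exist a finite $\mathcal{E}\subset\mathcal{W}$ and a neighborhood $V_y$ of $y$ such that every countable compact $L\subset V_y$ satisfies $L\subset F(K)$ for some compact $K\subset\bigcup\mathcal{E}$. Then: (a) if $F$ satisfies (1) and (2), $X$ is Lindelöf and $Y$ is a $\mu$-complete $q$-space, then $F$ is monotone set tri-quotient; (b) if $X$ is separable metrizable and $Y$ is first countable, then $F$ satisfies $(3)_c$; moreover, in this case, if $F$ also satisfies (1) and $(2)_c$, then $F$ is monotone set tri-quotient.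
   Context: All spaces are completely regular. $\mathcal{K}(X)$ is the set of compact subsets of $X$, $\mathcal{T}(X)$ the topology of $X$. $F\colon\mathcal{K}(X)\to 2^Y$ is monotone if $K\subset L$ implies $F(K)\subset F(L)$; it is set tri-quotient if there is $s\colon\mathcal{T}(X)\to\mathcal{T}(Y)$ with: (str1) $s(U)\subset\bigcup\{F(K):K\in\mathcal{K}(X),K\subset U\}$; (str2) $s(X)=Y$; (str3) $U\subset V\Rightarrow s(U)\subset s(V)$; (str4) if $y\in s(U)$ and $\mathcal{W}$ is a cover of $\bigcup\{K\in F^{-1}(y):K\subset U\}$ by open subsets of $X$, then $y\in s(\bigcup\mathcal{E})$ for some finite $\mathcal{E}\subset\mathcal{W}$, where $F^{-1}(y)=\{K\in\mathcal{K}(X):y\in F(K)\}$. $Y$ is $\mu$-complete ($\mu$-space) if every closed bounded subset is compact, where $A$ is bounded if every continuous real function is bounded on $A$. $Y$ is a $q$-space if each $y\in Y$ has a sequence of neighborhoods $U_n$ such that whenever $y_n\in U_n$ for all $n$, $\{y_n\}$ has a cluster point in $Y$. *)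

theory Defs
  imports "HOL-Analysis.Analysis"
begin

definition tychonoff_space :: "'a topology \<Rightarrow> bool" where
  "tychonoff_space X \<longleftrightarrow> completely_regular_space X \<and> Hausdorff_space X"

definition nbhd_of :: "'a topology \<Rightarrow> 'a set \<Rightarrow> 'a \<Rightarrow> bool" where
  "nbhd_of Y N y \<longleftrightarrow> N \<subseteq> topspace Y \<and> (\<exists>V. openin Y V \<and> y \<in> V \<and> V \<subseteq> N)"

definition bounded_in :: "'a topology \<Rightarrow> 'a set \<Rightarrow> bool" where
  "bounded_in Y A \<longleftrightarrow> A \<subseteq> topspace Y \<and>
     (\<forall>f. continuous_map Y euclideanreal f \<longrightarrow> bounded (f ` A))"

definition mu_complete :: "'a topology \<Rightarrow> bool" where
  "mu_complete Y \<longleftrightarrow> (\<forall>A. closedin Y A \<and> bounded_in Y A \<longrightarrow> compactin Y A)"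

definition seq_cluster_point :: "'a topology \<Rightarrow> (nat \<Rightarrow> 'a) \<Rightarrow> 'a \<Rightarrow> bool" where
  "seq_cluster_point Y ys z \<longleftrightarrow> z \<in> topspace Y \<and>
     (\<forall>V. openin Y V \<and> z \<in> V \<longrightarrow> (\<forall>N. \<exists>n\<ge>N. ys n \<in> V))"

definition q_space :: "'a topology \<Rightarrow> bool" where
  "q_space Y \<longleftrightarrow> (\<forall>y\<in>topspace Y. \<exists>U :: nat \<Rightarrow> 'a set.
      (\<forall>n. nbhd_of Y (U n) y) \<and>
      (\<forall>ys. (\<forall>n. ys n \<in> U n) \<longrightarrow> (\<exists>z. seq_cluster_point Y ys z)))"

definition maps_compacts :: "'a topology \<Rightarrow> 'b topology \<Rightarrow> ('a set \<Rightarrow> 'b set) \<Rightarrow> bool" where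
  "maps_compacts X Y F \<longleftrightarrow> (\<forall>K. compactin X K \<longrightarrow> compactin Y (F K))"

definition monotone_K :: "'a topology \<Rightarrow> ('a set \<Rightarrow> 'b set) \<Rightarrow> bool" where
  "monotone_K X F \<longleftrightarrow> (\<forall>K L. compactin X K \<and> compactin X L \<and> K \<subseteq> L \<longrightarrow> F K \<subseteq> F L)"

definition set_tri_quotient :: "'a topology \<Rightarrow> 'b topology \<Rightarrow> ('a set \<Rightarrow> 'b set) \<Rightarrow> bool" where
  "set_tri_quotient X Y F \<longleftrightarrow> (\<exists>s :: 'a set \<Rightarrow> 'b set.
     (\<forall>U. openin X U \<longrightarrow> openin Y (s U)) \<and>
     (\<forall>U. openin X U \<longrightarrow> s U \<subseteq> \<Union>{F K | K. compactin X K \<and> K \<subseteq> U}) \<and>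
     s (topspace X) = topspace Y \<and>
     (\<forall>U V. openin X U \<and> openin X V \<and> U \<subseteq> V \<longrightarrow> s U \<subseteq> s V) \<and>
     (\<forall>U y \<W>. openin X U \<and> y \<in> s U \<and> (\<forall>W\<in>\<W>. openin X W) \<and>
         \<Union>{K. compactin X K \<and> y \<in> F K \<and> K \<subseteq> U} \<subseteq> \<Union>\<W> \<longrightarrow>
         (\<exists>\<E>. finite \<E> \<and> \<E> \<subseteq> \<W> \<and> y \<in> s (\<Union>\<E>))))"

definition cond2 :: "'a topology \<Rightarrow> 'b topology \<Rightarrow> ('a set \<Rightarrow> 'b set) \<Rightarrow> bool" where
  "cond2 X Y F \<longleftrightarrow> (\<forall>L. compactin Y L \<longrightarrow> (\<exists>K. compactin X K \<and> L \<subseteq> F K))"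

definition cond2c :: "'a topology \<Rightarrow> 'b topology \<Rightarrow> ('a set \<Rightarrow> 'b set) \<Rightarrow> bool" where
  "cond2c X Y F \<longleftrightarrow> (\<forall>L. compactin Y L \<and> countable L \<longrightarrow> (\<exists>K. compactin X K \<and> L \<subseteq> F K))"

definition cond3c :: "'a topology \<Rightarrow> 'b topology \<Rightarrow> ('a set \<Rightarrow> 'b set) \<Rightarrow> bool" where
  "cond3c X Y F \<longleftrightarrow> (\<forall>U V. openin X U \<and> U \<noteq> {} \<and> openin Y V \<and> V \<noteq> {} \<and>
     (\<forall>L. compactin Y L \<and> countable L \<and> L \<subseteq> V \<longrightarrow>
          (\<exists>K. compactin X K \<and> K \<subseteq> U \<and> L \<subseteq> F K)) \<longrightarrow>
     (\<forall>\<W> y. (\<forall>W\<in>\<W>. openin X W) \<and> U \<subseteq> \<Union>\<W> \<and> y \<in> V \<longrightarrow>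
        (\<exists>\<E> Vy. finite \<E> \<and> \<E> \<subseteq> \<W> \<and> nbhd_of Y Vy y \<and>
           (\<forall>L. compactin Y L \<and> countable L \<and> L \<subseteq> Vy \<longrightarrow>
              (\<exists>K. compactin X K \<and> K \<subseteq> \<Union>\<E> \<and> L \<subseteq> F K)))))"

end

theory Submission
  imports Defs
begin

text \<open>
  For open \<open>U \<subseteq> X\<close> let \<open>s(U)\<close> be the union of all open \<open>V \<subseteq> Y\<close> such that every compact
  \<open>L \<subseteq> V\<close> (in (b): every countable one) lies in some \<open>F(K)\<close> with \<open>K\<close> compact inside \<open>U\<close>
  (in (a): inside a closed subset of \<open>U\<close>). The relevant part of \<open>U\<close> is
  exhausted by countably many stages, each covered by finitely many members of \<open>\<W>\<close>: by second
  countability in (b), by regularity and the Lindelof property in (a). If no stage lifted over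
  the corresponding member of a sequence of neighbourhoods \<open>T\<^sub>n\<close> of \<open>y\<close>, pick bad compacta
  \<open>L\<^sub>n \<subseteq> T\<^sub>n\<close>. Their union lies in a compact subset of \<open>V\<close>: in (b) the \<open>L\<^sub>n\<close> converge to \<open>y\<close>, in (a)
  the \<open>q\<close>-property makes the closure of the union bounded, hence compact by \<open>\<mu>\<close>-completeness. Its
  lift \<open>K\<close> then lies in a single stage, contradicting the choice of that stage's \<open>L\<^sub>n\<close>.
\<close>

section \<open>Countability, regularity and convergent sequences of compacta\<close>

lemma (in Metric_space) dense_mball_base:
  assumes dense: "mtopology closure_of C = M" and U: "openin mtopology U" "x \<in> U"
  shows "\<exists>c\<in>C. \<exists>n::nat. x \<in> mball c (1 / Suc n) \<and> mball c (1 / Suc n) \<subseteq> U"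
proof -
  obtain r where r: "r > 0" "mball x r \<subseteq> U"
    using U unfolding openin_mtopology by meson
  have xM: "x \<in> M"
    using U unfolding openin_mtopology by blast
  obtain n :: nat where "inverse (real (Suc n)) < r / 2"
    using reals_Archimedean[of "r / 2"] r(1) by auto
  then have n: "1 / Suc n < r / 2"
    by (simp add: inverse_eq_divide)
  have "\<forall>\<epsilon>>0. \<exists>c\<in>C. c \<in> mball x \<epsilon>"
    using xM dense metric_closure_of by auto
  moreover have "(1::real) / Suc n > 0"
    by simp
  ultimately obtain c where c: "c \<in> C" "c \<in> mball x (1 / Suc n)"
    by blast
  have "mball c (1 / Suc n) \<subseteq> mball x r"
  proof
    fix z assume "z \<in> mball c (1 / Suc n)"
    then have z: "z \<in> M" "c \<in> M" "d c z < 1 / Suc n" "d x c < 1 / Suc n"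
      using c unfolding mball_def by auto
    have "d x z \<le> d x c + d c z"
      using z xM triangle by blast
    also have "\<dots> < r"
      using z n by linarith
    finally show "z \<in> mball x r"
      using z xM unfolding mball_def by simp
  qed
  moreover have "x \<in> mball c (1 / Suc n)"
    using c xM commute unfolding mball_def by simp
  ultimately show ?thesis
    using c(1) r(2) by blast
qed

lemma separable_metrizable_imp_second_countable:
  assumes "separable_space X" "metrizable_space X"
  shows "second_countable X"
proof -
  obtain M d where md: "Metric_space M d" and X: "X = Metric_space.mtopology M d"
    using assms(2) metrizable_space_def by blast
  interpret Metric_space M d by (rule md)
  obtain C where C: "countable C" "mtopology closure_of C = M"
    using assms(1) unfolding separable_space_def X by auto
  define \<B> where "\<B> = (\<lambda>(c, n). mball c (1 / Suc n)) ` (C \<times> (UNIV :: nat set))"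
  have "\<exists>B\<in>\<B>. x \<in> B \<and> B \<subseteq> U" if "openin mtopology U" "x \<in> U" for U x
    using dense_mball_base[OF C(2) that] unfolding \<B>_def by blast
  moreover have "countable \<B>"
    by (simp add: \<B>_def C(1))
  moreover have "\<forall>B\<in>\<B>. openin mtopology B"
    by (auto simp: \<B>_def)
  ultimately show ?thesis
    unfolding second_countable_def X by blast
qed

lemma second_countable_countable_subcover:
  assumes "second_countable X" "\<forall>W\<in>\<W>. openin X W" "S \<subseteq> \<Union>\<W>"
  obtains \<V> where "countable \<V>" "\<V> \<subseteq> \<W>" "S \<subseteq> \<Union>\<V>"
proof -
  have S: "S \<subseteq> topspace X"
    using assms(2,3) openin_subset by blast
  have "Lindelof_space (subtopology X S)"
    by (simp add: assms(1) second_countable_imp_Lindelof_space second_countable_subtopology)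
  then have "\<exists>\<V>. countable \<V> \<and> \<V> \<subseteq> \<W> \<and> S \<subseteq> \<Union>\<V>"
    using assms(2,3) by (simp add: Lindelof_space_subtopology_subset[OF S])
  with that show ?thesis
    by blast
qed

lemma countable_open_cover_exhausts_compacts:
  assumes "countable \<G>" "\<forall>G\<in>\<G>. openin X G" "S \<subseteq> \<Union>\<G>"
  obtains \<F> :: "nat \<Rightarrow> 'a set set"
  where "\<And>n. finite (\<F> n)" "\<And>n. \<F> n \<subseteq> \<G>"
    "\<And>K. \<lbrakk>compactin X K; K \<subseteq> S\<rbrakk> \<Longrightarrow> \<exists>n. K \<subseteq> \<Union>(\<F> n)"
proof (cases "\<G> = {}")
  case True
  show ?thesis
  proof (rule that[of "\<lambda>_. {}"])
    fix K assume "K \<subseteq> S"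
    with assms(3) True show "\<exists>n. K \<subseteq> \<Union>{}"
      by simp
  qed auto
next
  case False
  define g where "g = from_nat_into \<G>"
  have range_g: "range g = \<G>"
    unfolding g_def using assms(1) False by simp
  show ?thesis
  proof (rule that[of "\<lambda>n. g ` {..n}"])
    fix K assume "compactin X K" "K \<subseteq> S"
    moreover have "K \<subseteq> \<Union>(range g)"
      using \<open>K \<subseteq> S\<close> assms(3) range_g by blast
    ultimately obtain \<H> where "finite \<H>" "\<H> \<subseteq> range g" "K \<subseteq> \<Union>\<H>"
      using compactinD[of X K "range g"] assms(2) range_g by blast
    then obtain I where I: "finite I" "\<H> = g ` I"
      by (meson finite_subset_image)
    then have "I \<subseteq> {..Max (insert 0 I)}"
      by auto
    then have "\<H> \<subseteq> g ` {..Max (insert 0 I)}"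
      unfolding I(2) by (rule image_mono)
    with \<open>K \<subseteq> \<Union>\<H>\<close> show "\<exists>n. K \<subseteq> \<Union>(g ` {..n})"
      by blast
  qed (use range_g in auto)
qed

lemma regular_space_closure_of_nbhd:
  assumes "regular_space X" "openin X W" "x \<in> W"
  obtains G where "openin X G" "x \<in> G" "X closure_of G \<subseteq> W"
proof -
  obtain G D where "openin X G" "closedin X D" "x \<in> G" "G \<subseteq> D" "D \<subseteq> W"
    using assms neighbourhood_base_of_closedin[of X] unfolding neighbourhood_base_of by blast
  moreover have "X closure_of G \<subseteq> D"
    using \<open>G \<subseteq> D\<close> \<open>closedin X D\<close> by (rule closure_of_minimal)
  ultimately show ?thesis
    using that by blast
qed

lemma Lindelof_regular_countable_refinement:
  assumes reg: "regular_space X" and Lin: "Lindelof_space X" and C: "closedin X C"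
    and opn: "\<forall>W\<in>\<W>. openin X W" and cov: "C \<subseteq> \<Union>\<W>"
  obtains \<G> where "countable \<G>" "\<forall>G\<in>\<G>. openin X G" "C \<subseteq> \<Union>\<G>"
    "\<forall>G\<in>\<G>. \<exists>W\<in>\<W>. X closure_of G \<subseteq> W"
proof -
  define \<O> where "\<O> = {G. openin X G \<and> (\<exists>W\<in>\<W>. X closure_of G \<subseteq> W)}"
  have cover: "C \<subseteq> \<Union>\<O>"
  proof
    fix x assume "x \<in> C"
    then obtain W where W: "W \<in> \<W>" "x \<in> W"
      using cov by blast
    obtain G where "openin X G" "x \<in> G" "X closure_of G \<subseteq> W"
      by (rule regular_space_closure_of_nbhd[OF reg opn[rule_format, OF W(1)] W(2)]) (rule that)
    then show "x \<in> \<Union>\<O>"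
      unfolding \<O>_def using \<open>W \<in> \<W>\<close> by blast
  qed
  have "\<forall>\<U>. (\<forall>U\<in>\<U>. openin X U) \<and> C \<subseteq> \<Union>\<U> \<longrightarrow> (\<exists>\<V>. countable \<V> \<and> \<V> \<subseteq> \<U> \<and> C \<subseteq> \<Union>\<V>)"
    using Lindelof_space_closedin_subtopology[OF Lin C]
    by (rule Lindelof_space_subtopology_subset[OF closedin_subset[OF C], THEN iffD1])
  then have "(\<forall>G\<in>\<O>. openin X G) \<and> C \<subseteq> \<Union>\<O> \<longrightarrow> (\<exists>\<V>. countable \<V> \<and> \<V> \<subseteq> \<O> \<and> C \<subseteq> \<Union>\<V>)"
    by (rule spec)
  moreover have "(\<forall>G\<in>\<O>. openin X G) \<and> C \<subseteq> \<Union>\<O>"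
    using cover by (simp add: \<O>_def)
  ultimately obtain \<G> where "countable \<G>" "\<G> \<subseteq> \<O>" "C \<subseteq> \<Union>\<G>"
    by blast
  with that show ?thesis
    unfolding \<O>_def by blast
qed

lemma Lindelof_regular_closed_exhaustion:
  assumes reg: "regular_space X" and Lin: "Lindelof_space X" and C: "closedin X C"
    and opn: "\<forall>W\<in>\<W>. openin X W" and cov: "C \<subseteq> \<Union>\<W>"
  obtains Cn :: "nat \<Rightarrow> 'a set" and \<E> :: "nat \<Rightarrow> 'a set set"
  where "\<And>n. closedin X (Cn n)" "\<And>n. finite (\<E> n)" "\<And>n. \<E> n \<subseteq> \<W>"
    "\<And>n. Cn n \<subseteq> \<Union>(\<E> n)" "\<And>K. \<lbrakk>compactin X K; K \<subseteq> C\<rbrakk> \<Longrightarrow> \<exists>n. K \<subseteq> Cn n"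
proof -
  obtain \<G> where \<G>: "countable \<G>" "\<forall>G\<in>\<G>. openin X G" "C \<subseteq> \<Union>\<G>"
    and closures: "\<forall>G\<in>\<G>. \<exists>W\<in>\<W>. X closure_of G \<subseteq> W"
    by (rule Lindelof_regular_countable_refinement[OF reg Lin C opn cov]) (rule that)
  obtain \<F> :: "nat \<Rightarrow> 'a set set" where \<F>: "\<And>n. finite (\<F> n)" "\<And>n. \<F> n \<subseteq> \<G>"
    and exhaust: "\<And>K. \<lbrakk>compactin X K; K \<subseteq> C\<rbrakk> \<Longrightarrow> \<exists>n. K \<subseteq> \<Union>(\<F> n)"
    by (rule countable_open_cover_exhausts_compacts[OF \<G>]) (rule that)
  obtain w where w: "\<And>G. G \<in> \<G> \<Longrightarrow> w G \<in> \<W> \<and> X closure_of G \<subseteq> w G"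
    using closures by metis
  show ?thesis
  proof (rule that[of "\<lambda>n. C \<inter> \<Union>((closure_of) X ` \<F> n)" "\<lambda>n. w ` \<F> n"])
    fix K assume "compactin X K" "K \<subseteq> C"
    then obtain n where "K \<subseteq> \<Union>(\<F> n)"
      using exhaust by blast
    moreover have "G \<subseteq> X closure_of G" if "G \<in> \<F> n" for G
      using \<G>(2) \<F>(2) that by (meson closure_of_subset openin_subset subsetD)
    ultimately show "\<exists>n. K \<subseteq> C \<inter> \<Union>((closure_of) X ` \<F> n)"
      using \<open>K \<subseteq> C\<close> by blast
  next
    fix n
    show "closedin X (C \<inter> \<Union>((closure_of) X ` \<F> n))"
      using C \<F>(1) by (intro closedin_Int closedin_Union) auto
    have "X closure_of G \<subseteq> w G" if "G \<in> \<F> n" for G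
      using that \<F>(2) w by blast
    then show "C \<inter> \<Union>((closure_of) X ` \<F> n) \<subseteq> \<Union>(w ` \<F> n)"
      by blast
    show "w ` \<F> n \<subseteq> \<W>"
      using \<F>(2) w by blast
  qed (use \<F>(1) in auto)
qed

lemma unbounded_Union_compacts_escapes:
  assumes compact: "\<And>n. compactin Y (Ls n)" and f: "continuous_map Y euclideanreal f"
    and unbounded: "\<not> bounded (f ` \<Union>(range Ls))"
  shows "\<exists>n a. k \<le> n \<and> a \<in> Ls n \<and> real k < \<bar>f a\<bar>"
proof -
  have "compactin Y (\<Union>(Ls ` {..<k}))"
    by (intro compactin_Union) (auto intro: compact)
  then have "compactin euclideanreal (f ` \<Union>(Ls ` {..<k}))"
    by (rule image_compactin[OF _ f])
  then have "bounded (f ` \<Union>(Ls ` {..<k}))"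
    by (simp add: compact_imp_bounded)
  then obtain B where B: "\<forall>x\<in>f ` \<Union>(Ls ` {..<k}). norm x \<le> B"
    unfolding bounded_iff by blast
  have "\<not> (\<forall>x\<in>f ` \<Union>(range Ls). norm x \<le> max B (real k))"
    using unbounded unfolding bounded_iff by blast
  then obtain n a where a: "a \<in> Ls n" "\<not> norm (f a) \<le> max B (real k)"
    by blast
  have "\<not> n < k"
  proof
    assume "n < k"
    then have "norm (f a) \<le> B"
      using a(1) B by blast
    then show False
      using a(2) by simp
  qed
  moreover have "real k < \<bar>f a\<bar>"
    using a(2) by simp
  ultimately show ?thesis
    using a(1) by (meson not_less)
qed

lemma q_space_bounded_in_Union:
  fixes U Ls :: "nat \<Rightarrow> 'a set"
  assumes cluster: "\<And>ys. (\<And>n. ys n \<in> U n) \<Longrightarrow> \<exists>z. seq_cluster_point Y ys z"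
    and compact: "\<And>n. compactin Y (Ls n)" and shrink: "\<And>k n. k \<le> n \<Longrightarrow> Ls n \<subseteq> U k"
  shows "bounded_in Y (\<Union>(range Ls))"
  unfolding bounded_in_def
proof (intro conjI allI impI)
  show "\<Union>(range Ls) \<subseteq> topspace Y"
    using compact compactin_subset_topspace by blast
  fix f :: "'a \<Rightarrow> real"
  assume f: "continuous_map Y euclideanreal f"
  show "bounded (f ` \<Union>(range Ls))"
  proof (rule ccontr)
    assume unbounded: "\<not> bounded (f ` \<Union>(range Ls))"
    have "\<exists>a. a \<in> U k \<and> real k < \<bar>f a\<bar>" for k
    proof -
      obtain n a where "k \<le> n" "a \<in> Ls n" "real k < \<bar>f a\<bar>"
        using unbounded_Union_compacts_escapes[OF compact f unbounded, of k] by blast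
      then show ?thesis
        using shrink by blast
    qed
    then obtain ys where ys: "\<And>k. ys k \<in> U k" "\<And>k. real k < \<bar>f (ys k)\<bar>"
      by metis
    then obtain z where z: "seq_cluster_point Y ys z"
      using cluster by blast
    define G where "G = {x \<in> topspace Y. f x \<in> ball (f z) 1}"
    have "openin Y G"
      unfolding G_def by (rule openin_continuous_map_preimage[OF f]) simp
    moreover have "z \<in> G"
      using z unfolding G_def seq_cluster_point_def by simp
    ultimately obtain n where n: "n \<ge> nat \<lceil>\<bar>f z\<bar> + 1\<rceil>" "ys n \<in> G"
      using z unfolding seq_cluster_point_def by blast
    then have "\<bar>f z - f (ys n)\<bar> < 1"
      unfolding G_def by (simp add: dist_real_def)
    then have "\<bar>f (ys n)\<bar> < \<bar>f z\<bar> + 1"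
      by arith
    moreover have "\<bar>f z\<bar> + 1 \<le> real n"
      using n(1) by linarith
    ultimately show False
      using ys(2)[of n] by linarith
  qed
qed

lemma bounded_in_closure_of:
  assumes "bounded_in Y A"
  shows "bounded_in Y (Y closure_of A)"
  unfolding bounded_in_def
proof (intro conjI allI impI)
  show "Y closure_of A \<subseteq> topspace Y"
    by (rule closure_of_subset_topspace)
  fix f :: "'a \<Rightarrow> real"
  assume f: "continuous_map Y euclideanreal f"
  have "f ` (Y closure_of A) \<subseteq> closure (f ` A)"
    using continuous_map_image_closure_subset[OF f] by simp
  moreover have "bounded (closure (f ` A))"
    using assms f unfolding bounded_in_def by (simp add: bounded_closure)
  ultimately show "bounded (f ` (Y closure_of A))"
    by (rule bounded_subset[rotated])
qed

lemma mu_complete_q_space_nbhd_sequence: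
  assumes reg: "regular_space Y" and mu: "mu_complete Y" and q: "q_space Y"
    and V: "openin Y V" "y \<in> V"
  obtains T :: "nat \<Rightarrow> 'a set" where "\<And>n. openin Y (T n)" "\<And>n. y \<in> T n"
    "\<forall>Ls. (\<forall>n. compactin Y (Ls n) \<and> Ls n \<subseteq> T n) \<longrightarrow>
      compactin Y (Y closure_of \<Union>(range Ls)) \<and> Y closure_of \<Union>(range Ls) \<subseteq> V"
proof -
  obtain G0 where G0: "openin Y G0" "y \<in> G0" "Y closure_of G0 \<subseteq> V"
    by (rule regular_space_closure_of_nbhd[OF reg V]) (rule that)
  have "y \<in> topspace Y"
    using V openin_subset by blast
  then obtain U :: "nat \<Rightarrow> 'a set" where U: "\<And>n. nbhd_of Y (U n) y"
    and cluster: "\<And>ys. (\<And>n. ys n \<in> U n) \<Longrightarrow> \<exists>z. seq_cluster_point Y ys z"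
    using q unfolding q_space_def by metis
  have "\<forall>n. \<exists>G. openin Y G \<and> y \<in> G \<and> G \<subseteq> U n"
    using U unfolding nbhd_of_def by blast
  then obtain G where "\<forall>n. openin Y (G n) \<and> y \<in> G n \<and> G n \<subseteq> U n"
    by (rule choice[THEN exE])
  then have G: "\<And>n. openin Y (G n)" "\<And>n. y \<in> G n" "\<And>n. G n \<subseteq> U n"
    by auto
  define T where "T n = G0 \<inter> \<Inter>(G ` {..n})" for n
  have T: "openin Y (T n)" "y \<in> T n" "T n \<subseteq> G0" "k \<le> n \<Longrightarrow> T n \<subseteq> G k" for k n
    unfolding T_def using G0(1,2) G(1,2) by (auto intro!: openin_Int openin_Inter)
  show ?thesis
  proof (rule that[OF T(1,2)], intro allI impI)
    fix Ls assume "\<forall>n. compactin Y (Ls n) \<and> Ls n \<subseteq> T n"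
    then have Ls: "\<And>n. compactin Y (Ls n)" "\<And>n. Ls n \<subseteq> T n"
      by auto
    have "bounded_in Y (\<Union>(range Ls))"
    proof (rule q_space_bounded_in_Union[OF cluster Ls(1)])
      show "Ls n \<subseteq> U k" if "k \<le> n" for k n
        using Ls(2) T(4)[OF that] G(3) by blast
    qed
    then show "compactin Y (Y closure_of \<Union>(range Ls)) \<and> Y closure_of \<Union>(range Ls) \<subseteq> V"
      using mu unfolding mu_complete_def
      by (metis G0(3) Ls(2) T(3) UN_least bounded_in_closure_of closedin_closure_of
          closure_of_mono order_trans)
  qed
qed

lemma compactin_insert_Union_converging:
  fixes Ls T :: "nat \<Rightarrow> 'a set"
  assumes y: "y \<in> topspace Y" and compact: "\<And>n. compactin Y (Ls n)" and sub: "\<And>n. Ls n \<subseteq> T n"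
    and conv: "\<And>G. \<lbrakk>openin Y G; y \<in> G\<rbrakk> \<Longrightarrow> \<exists>N. \<forall>n\<ge>N. T n \<subseteq> G"
  shows "compactin Y (insert y (\<Union>(range Ls)))"
  unfolding compactin_def
proof (intro conjI allI impI)
  show "insert y (\<Union>(range Ls)) \<subseteq> topspace Y"
    using y compact compactin_subset_topspace by blast
  fix \<U> assume \<U>: "(\<forall>U\<in>\<U>. openin Y U) \<and> insert y (\<Union>(range Ls)) \<subseteq> \<Union>\<U>"
  then obtain G where G: "G \<in> \<U>" "y \<in> G"
    by blast
  then obtain N where N: "\<forall>n\<ge>N. T n \<subseteq> G"
    using conv \<U> by blast
  have "compactin Y (\<Union>(Ls ` {..<N}))"
    by (intro compactin_Union) (auto intro: compact)
  moreover have "\<Union>(Ls ` {..<N}) \<subseteq> \<Union>\<U>"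
    using \<U> by blast
  ultimately obtain \<F> where \<F>: "finite \<F>" "\<F> \<subseteq> \<U>" "\<Union>(Ls ` {..<N}) \<subseteq> \<Union>\<F>"
    using \<U> compactinD[of Y "\<Union>(Ls ` {..<N})" \<U>] by blast
  have "Ls n \<subseteq> \<Union>(insert G \<F>)" for n
  proof (cases "n < N")
    case True
    then show ?thesis
      using \<F>(3) by blast
  next
    case False
    then have "T n \<subseteq> G"
      using N by simp
    then show ?thesis
      using sub[of n] by blast
  qed
  then have "insert y (\<Union>(range Ls)) \<subseteq> \<Union>(insert G \<F>)"
    using G(2) by blast
  then show "\<exists>\<F>. finite \<F> \<and> \<F> \<subseteq> \<U> \<and> insert y (\<Union>(range Ls)) \<subseteq> \<Union>\<F>"
    using \<F>(1,2) G(1) by (intro exI[of _ "insert G \<F>"]) auto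
qed

lemma first_countable_converging_nbhds:
  assumes fc: "first_countable Y" and V: "openin Y V" "y \<in> V"
  obtains T :: "nat \<Rightarrow> 'a set" where "\<And>n. openin Y (T n)" "\<And>n. y \<in> T n" "\<And>n. T n \<subseteq> V"
    "\<forall>G. openin Y G \<and> y \<in> G \<longrightarrow> (\<exists>N. \<forall>n\<ge>N. T n \<subseteq> G)"
proof -
  have y: "y \<in> topspace Y"
    using V openin_subset by blast
  have "\<exists>\<B>. countable \<B> \<and> (\<forall>B\<in>\<B>. openin Y B) \<and>
      (\<forall>U. openin Y U \<and> y \<in> U \<longrightarrow> (\<exists>B\<in>\<B>. y \<in> B \<and> B \<subseteq> U))"
    using fc y unfolding first_countable_def by blast
  then obtain \<B> where \<B>: "countable \<B>" "\<forall>B\<in>\<B>. openin Y B"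
    "\<forall>U. openin Y U \<and> y \<in> U \<longrightarrow> (\<exists>B\<in>\<B>. y \<in> B \<and> B \<subseteq> U)"
    by (elim exE conjE)
  define \<B>y where "\<B>y = {B \<in> \<B>. y \<in> B}"
  have "\<B>y \<noteq> {}"
    using \<B>(3) y unfolding \<B>y_def by blast
  moreover have "countable \<B>y"
    using \<B>(1) by (simp add: \<B>y_def)
  ultimately have range_b: "range (from_nat_into \<B>y) = \<B>y"
    by simp
  define b where "b = from_nat_into \<B>y"
  have "b n \<in> \<B>y" for n
    unfolding b_def by (metis range_b rangeI)
  then have b: "openin Y (b n)" "y \<in> b n" for n
    using \<B>(2) unfolding \<B>y_def by auto
  define T where "T n = V \<inter> \<Inter>(b ` {..n})" for n
  have T: "openin Y (T n)" "y \<in> T n" "T n \<subseteq> V" "k \<le> n \<Longrightarrow> T n \<subseteq> b k" for k n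
    unfolding T_def using V b by (auto intro!: openin_Int openin_Inter)
  have "\<forall>G. openin Y G \<and> y \<in> G \<longrightarrow> (\<exists>N. \<forall>n\<ge>N. T n \<subseteq> G)"
  proof (intro allI impI)
    fix G assume G: "openin Y G \<and> y \<in> G"
    obtain B where "B \<in> \<B>" "y \<in> B" "B \<subseteq> G"
      using \<B>(3) G by blast
    then have "B \<in> \<B>y"
      unfolding \<B>y_def by blast
    then have "B \<in> range b"
      unfolding b_def range_b .
    then obtain i where "b i \<subseteq> G"
      using \<open>B \<subseteq> G\<close> by blast
    then have "\<forall>n\<ge>i. T n \<subseteq> G"
      using T(4) by blast
    then show "\<exists>N. \<forall>n\<ge>N. T n \<subseteq> G"
      by blast
  qed
  with T(1-3) show ?thesis
    by (rule that)
qed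

lemma first_countable_nbhd_sequence:
  assumes fc: "first_countable Y" and V: "openin Y V" "y \<in> V"
  obtains T :: "nat \<Rightarrow> 'a set" where "\<And>n. openin Y (T n)" "\<And>n. y \<in> T n"
    "\<forall>Ls. (\<forall>n. compactin Y (Ls n) \<and> Ls n \<subseteq> T n) \<longrightarrow>
      compactin Y (insert y (\<Union>(range Ls))) \<and> insert y (\<Union>(range Ls)) \<subseteq> V"
proof -
  obtain T :: "nat \<Rightarrow> 'a set" where T: "\<And>n. openin Y (T n)" "\<And>n. y \<in> T n" "\<And>n. T n \<subseteq> V"
    and conv: "\<forall>G. openin Y G \<and> y \<in> G \<longrightarrow> (\<exists>N. \<forall>n\<ge>N. T n \<subseteq> G)"
    by (rule first_countable_converging_nbhds[OF fc V]) (rule that)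
  have y: "y \<in> topspace Y"
    using V openin_subset by blast
  show ?thesis
  proof (rule that[OF T(1,2)], intro allI impI)
    fix Ls assume "\<forall>n. compactin Y (Ls n) \<and> Ls n \<subseteq> T n"
    then have Ls: "\<And>n. compactin Y (Ls n)" "\<And>n. Ls n \<subseteq> T n"
      by auto
    have "compactin Y (insert y (\<Union>(range Ls)))"
      using conv by (intro compactin_insert_Union_converging[OF y Ls]) blast
    moreover have "insert y (\<Union>(range Ls)) \<subseteq> V"
      using Ls(2) T(3) V(2) by blast
    ultimately show "compactin Y (insert y (\<Union>(range Ls))) \<and> insert y (\<Union>(range Ls)) \<subseteq> V"
      by blast
  qed
qed

section \<open>Lifting compact sets through \<open>F\<close>\<close>

text \<open>\<open>Q = (\<lambda>_. True)\<close> is the situation of part (a), \<open>Q = countable\<close> that of \<open>(2)\<^sub>c\<close> and \<open>(3)\<^sub>c\<close>.\<close>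

definition lifts_compacts ::
  "'a topology \<Rightarrow> 'b topology \<Rightarrow> ('a set \<Rightarrow> 'b set) \<Rightarrow> ('b set \<Rightarrow> bool) \<Rightarrow> 'a set \<Rightarrow> 'b set \<Rightarrow> bool"
  where "lifts_compacts X Y F Q C V \<longleftrightarrow>
    (\<forall>L. compactin Y L \<and> Q L \<and> L \<subseteq> V \<longrightarrow> (\<exists>K. compactin X K \<and> K \<subseteq> C \<and> L \<subseteq> F K))"

lemma lifts_compactsD:
  "\<lbrakk>lifts_compacts X Y F Q C V; compactin Y L; Q L; L \<subseteq> V\<rbrakk>
    \<Longrightarrow> \<exists>K. compactin X K \<and> K \<subseteq> C \<and> L \<subseteq> F K"
  unfolding lifts_compacts_def by blast

lemma lifts_compacts_mono:
  "\<lbrakk>lifts_compacts X Y F Q C V; C \<subseteq> C'; V' \<subseteq> V\<rbrakk> \<Longrightarrow> lifts_compacts X Y F Q C' V'"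
  unfolding lifts_compacts_def by (meson order_trans)

lemma lifts_compacts_point:
  assumes lift: "lifts_compacts X Y F Q C V" and "Q {y}" "y \<in> V" "V \<subseteq> topspace Y"
  shows "\<exists>K. compactin X K \<and> K \<subseteq> C \<and> y \<in> F K"
proof -
  have "compactin Y {y}" "{y} \<subseteq> V"
    using assms(3,4) by auto
  then have "\<exists>K. compactin X K \<and> K \<subseteq> C \<and> {y} \<subseteq> F K"
    using lifts_compactsD[OF lift] assms(2) by blast
  then show ?thesis
    by blast
qed

lemma lifts_compacts_topspace:
  assumes "\<forall>L. compactin Y L \<and> Q L \<longrightarrow> (\<exists>K. compactin X K \<and> L \<subseteq> F K)"
  shows "lifts_compacts X Y F Q (topspace X) (topspace Y)"
  unfolding lifts_compacts_def
proof (intro allI impI)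
  fix L assume "compactin Y L \<and> Q L \<and> L \<subseteq> topspace Y"
  then obtain K where "compactin X K" "L \<subseteq> F K"
    using assms by blast
  then show "\<exists>K. compactin X K \<and> K \<subseteq> topspace X \<and> L \<subseteq> F K"
    using compactin_subset_topspace by blast
qed

lemma lifts_compacts_at_some_stage:
  fixes Cn :: "nat \<Rightarrow> 'a set" and T :: "nat \<Rightarrow> 'b set"
  assumes lift: "lifts_compacts X Y F Q C V"
    and union: "\<And>Ls. (\<And>n. compactin Y (Ls n) \<and> Q (Ls n) \<and> Ls n \<subseteq> T n)
      \<Longrightarrow> \<exists>L. compactin Y L \<and> Q L \<and> L \<subseteq> V \<and> (\<forall>n. Ls n \<subseteq> L)"
    and exhaust: "\<And>K. \<lbrakk>compactin X K; K \<subseteq> C\<rbrakk> \<Longrightarrow> \<exists>n. K \<subseteq> Cn n"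
  shows "\<exists>n. lifts_compacts X Y F Q (Cn n) (T n)"
proof (rule ccontr)
  assume "\<nexists>n. lifts_compacts X Y F Q (Cn n) (T n)"
  then have "\<forall>n. \<exists>L. (compactin Y L \<and> Q L \<and> L \<subseteq> T n) \<and>
      \<not> (\<exists>K. compactin X K \<and> K \<subseteq> Cn n \<and> L \<subseteq> F K)"
    unfolding lifts_compacts_def by blast
  then obtain Ls where Ls: "\<forall>n. (compactin Y (Ls n) \<and> Q (Ls n) \<and> Ls n \<subseteq> T n) \<and>
      \<not> (\<exists>K. compactin X K \<and> K \<subseteq> Cn n \<and> Ls n \<subseteq> F K)"
    by (rule choice[THEN exE])
  then obtain L where L: "compactin Y L" "Q L" "L \<subseteq> V" "\<forall>n. Ls n \<subseteq> L"
    using union by blast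
  then obtain K where K: "compactin X K" "K \<subseteq> C" "L \<subseteq> F K"
    using lifts_compactsD[OF lift] by blast
  then obtain n where "K \<subseteq> Cn n"
    using exhaust by blast
  then show False
    using Ls K L by blast
qed

lemma set_tri_quotientI:
  fixes P :: "'a set \<Rightarrow> 'b set \<Rightarrow> bool"
  assumes cover: "\<And>U V y. \<lbrakk>P U V; openin Y V; y \<in> V\<rbrakk> \<Longrightarrow> \<exists>K. compactin X K \<and> K \<subseteq> U \<and> y \<in> F K"
    and top: "P (topspace X) (topspace Y)"
    and mono: "\<And>U U' V. \<lbrakk>P U V; U \<subseteq> U'\<rbrakk> \<Longrightarrow> P U' V"
    and refine: "\<And>U V y \<W>. \<lbrakk>openin X U; openin Y V; P U V; y \<in> V; \<forall>W\<in>\<W>. openin X W;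
      \<Union>{K. compactin X K \<and> y \<in> F K \<and> K \<subseteq> U} \<subseteq> \<Union>\<W>\<rbrakk>
      \<Longrightarrow> \<exists>\<E> V'. finite \<E> \<and> \<E> \<subseteq> \<W> \<and> openin Y V' \<and> y \<in> V' \<and> P (\<Union>\<E>) V'"
  shows "set_tri_quotient X Y F"
proof -
  define s where "s U = \<Union>{V. openin Y V \<and> P U V}" for U
  have s_iff: "y \<in> s U \<longleftrightarrow> (\<exists>V. openin Y V \<and> P U V \<and> y \<in> V)" for y U
    unfolding s_def by blast
  have str1: "\<forall>U. openin X U \<longrightarrow> openin Y (s U)"
    unfolding s_def by (intro allI impI openin_Union) blast
  have str2: "\<forall>U. openin X U \<longrightarrow> s U \<subseteq> \<Union>{F K | K. compactin X K \<and> K \<subseteq> U}"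
  proof (intro allI impI subsetI)
    fix U y assume "y \<in> s U"
    then obtain V where "P U V" "openin Y V" "y \<in> V"
      using s_iff by blast
    then obtain K where "compactin X K" "K \<subseteq> U" "y \<in> F K"
      using cover by blast
    then show "y \<in> \<Union>{F K | K. compactin X K \<and> K \<subseteq> U}"
      by blast
  qed
  have "s (topspace X) \<subseteq> topspace Y"
    unfolding s_def using openin_subset by blast
  moreover have "topspace Y \<subseteq> s (topspace X)"
    unfolding s_def using top by blast
  ultimately have str3: "s (topspace X) = topspace Y"
    by (rule antisym)
  have str4: "\<forall>U U'. openin X U \<and> openin X U' \<and> U \<subseteq> U' \<longrightarrow> s U \<subseteq> s U'"
    unfolding s_def using mono by blast
  have str5: "\<forall>U y \<W>. openin X U \<and> y \<in> s U \<and> (\<forall>W\<in>\<W>. openin X W) \<and>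
      \<Union>{K. compactin X K \<and> y \<in> F K \<and> K \<subseteq> U} \<subseteq> \<Union>\<W> \<longrightarrow>
      (\<exists>\<E>. finite \<E> \<and> \<E> \<subseteq> \<W> \<and> y \<in> s (\<Union>\<E>))"
  proof (intro allI impI, elim conjE)
    fix U y \<W>
    assume U: "openin X U" and y: "y \<in> s U" and opn: "\<forall>W\<in>\<W>. openin X W"
      and cov: "\<Union>{K. compactin X K \<and> y \<in> F K \<and> K \<subseteq> U} \<subseteq> \<Union>\<W>"
    obtain V where V: "openin Y V" "P U V" "y \<in> V"
      using y s_iff by blast
    have "\<exists>\<E> V'. finite \<E> \<and> \<E> \<subseteq> \<W> \<and> openin Y V' \<and> y \<in> V' \<and> P (\<Union>\<E>) V'"
      by (rule refine[OF U V opn cov])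
    then obtain \<E> V' where "finite \<E>" "\<E> \<subseteq> \<W>" "openin Y V'" "y \<in> V'" "P (\<Union>\<E>) V'"
      by blast
    then show "\<exists>\<E>. finite \<E> \<and> \<E> \<subseteq> \<W> \<and> y \<in> s (\<Union>\<E>)"
      using s_iff by blast
  qed
  show ?thesis
    unfolding set_tri_quotient_def by (intro exI[of _ s] conjI str1 str2 str3 str4 str5)
qed

section \<open>Lindelof domain, \<open>\<mu>\<close>-complete \<open>q\<close>-space range\<close>

lemma monotone_K_subset_Union_fibre:
  assumes mono: "monotone_K X F" and K0: "compactin X K0" "K0 \<subseteq> C" "y \<in> F K0"
    and C: "C \<subseteq> topspace X"
  shows "C \<subseteq> \<Union>{K. compactin X K \<and> y \<in> F K \<and> K \<subseteq> C}"
proof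
  fix x assume "x \<in> C"
  then have "x \<in> topspace X"
    using C by blast
  then have K: "compactin X (insert x K0)"
    using compactin_Un[of X "{x}" K0] K0(1) by simp
  then have "F K0 \<subseteq> F (insert x K0)"
    using mono K0(1) unfolding monotone_K_def by blast
  with K K0 \<open>x \<in> C\<close> show "x \<in> \<Union>{K. compactin X K \<and> y \<in> F K \<and> K \<subseteq> C}"
    by blast
qed

lemma Lindelof_lift_refinement:
  assumes regX: "regular_space X" and LX: "Lindelof_space X" and regY: "regular_space Y"
    and mu: "mu_complete Y" and q: "q_space Y" and mono: "monotone_K X F"
    and C: "closedin X C" and V: "openin Y V" "y \<in> V"
    and lift: "lifts_compacts X Y F (\<lambda>_. True) C V"
    and opn: "\<forall>W\<in>\<W>. openin X W"
    and cov: "\<Union>{K. compactin X K \<and> y \<in> F K \<and> K \<subseteq> C} \<subseteq> \<Union>\<W>"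
  obtains \<E> T C' where "finite \<E>" "\<E> \<subseteq> \<W>" "openin Y T" "y \<in> T" "closedin X C'" "C' \<subseteq> \<Union>\<E>"
    "lifts_compacts X Y F (\<lambda>_. True) C' T"
proof -
  obtain K0 where K0: "compactin X K0" "K0 \<subseteq> C" "y \<in> F K0"
    using lifts_compacts_point[OF lift _ V(2) openin_subset[OF V(1)]] by blast
  have "C \<subseteq> \<Union>\<W>"
    using monotone_K_subset_Union_fibre[OF mono K0 closedin_subset[OF C]] cov by blast
  then obtain Cn :: "nat \<Rightarrow> 'a set" and \<E>
    where Cn: "\<And>n. closedin X (Cn n)" "\<And>n. finite (\<E> n)" "\<And>n. \<E> n \<subseteq> \<W>" "\<And>n. Cn n \<subseteq> \<Union>(\<E> n)"
      and exhaust: "\<And>K. \<lbrakk>compactin X K; K \<subseteq> C\<rbrakk> \<Longrightarrow> \<exists>n. K \<subseteq> Cn n"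
    by (rule Lindelof_regular_closed_exhaustion[OF regX LX C opn]) (rule that)
  obtain T :: "nat \<Rightarrow> 'b set" where T: "\<And>n. openin Y (T n)" "\<And>n. y \<in> T n"
    and closure: "\<forall>Ls. (\<forall>n. compactin Y (Ls n) \<and> Ls n \<subseteq> T n) \<longrightarrow>
      compactin Y (Y closure_of \<Union>(range Ls)) \<and> Y closure_of \<Union>(range Ls) \<subseteq> V"
    by (rule mu_complete_q_space_nbhd_sequence[OF regY mu q V]) (rule that)
  have "\<exists>n. lifts_compacts X Y F (\<lambda>_. True) (Cn n) (T n)"
  proof (rule lifts_compacts_at_some_stage[OF lift _ exhaust])
    fix Ls :: "nat \<Rightarrow> 'b set"
    assume "\<And>n. compactin Y (Ls n) \<and> True \<and> Ls n \<subseteq> T n"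
    then have Ls: "\<forall>n. compactin Y (Ls n) \<and> Ls n \<subseteq> T n"
      by blast
    then have "compactin Y (Y closure_of \<Union>(range Ls)) \<and> Y closure_of \<Union>(range Ls) \<subseteq> V"
      by (rule mp[OF spec[OF closure]])
    moreover have "\<Union>(range Ls) \<subseteq> topspace Y"
      using Ls compactin_subset_topspace by blast
    then have "\<Union>(range Ls) \<subseteq> Y closure_of \<Union>(range Ls)"
      by (rule closure_of_subset)
    ultimately show "\<exists>L. compactin Y L \<and> True \<and> L \<subseteq> V \<and> (\<forall>n. Ls n \<subseteq> L)"
      by blast
  qed
  then obtain n where "lifts_compacts X Y F (\<lambda>_. True) (Cn n) (T n)"
    by blast
  with Cn(2,3) T(1,2) Cn(1,4) show ?thesis
    by (rule that)
qed

lemma set_tri_quotient_if_Lindelof_q_space: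
  assumes regX: "regular_space X" and regY: "regular_space Y" and mono: "monotone_K X F"
    and c2: "cond2 X Y F" and LX: "Lindelof_space X" and mu: "mu_complete Y" and q: "q_space Y"
  shows "set_tri_quotient X Y F"
proof (rule set_tri_quotientI[where
      P = "\<lambda>U V. \<exists>C. closedin X C \<and> C \<subseteq> U \<and> lifts_compacts X Y F (\<lambda>_. True) C V"])
  \<comment> \<open>\<open>C\<close> is closed so that it inherits the Lindelof property for the next refinement.\<close>
  fix U V y
  assume "\<exists>C. closedin X C \<and> C \<subseteq> U \<and> lifts_compacts X Y F (\<lambda>_. True) C V"
    and V: "openin Y V" "y \<in> V"
  then obtain C where C: "C \<subseteq> U" "lifts_compacts X Y F (\<lambda>_. True) C V"
    by blast
  have "\<exists>K. compactin X K \<and> K \<subseteq> C \<and> y \<in> F K"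
    using lifts_compacts_point[OF C(2) _ V(2) openin_subset[OF V(1)]] by simp
  with C(1) show "\<exists>K. compactin X K \<and> K \<subseteq> U \<and> y \<in> F K"
    by blast
next
  have "lifts_compacts X Y F (\<lambda>_. True) (topspace X) (topspace Y)"
    using c2 unfolding cond2_def by (intro lifts_compacts_topspace) simp
  then show "\<exists>C. closedin X C \<and> C \<subseteq> topspace X \<and> lifts_compacts X Y F (\<lambda>_. True) C (topspace Y)"
    by blast
next
  fix U U' V
  assume "\<exists>C. closedin X C \<and> C \<subseteq> U \<and> lifts_compacts X Y F (\<lambda>_. True) C V" "U \<subseteq> U'"
  then show "\<exists>C. closedin X C \<and> C \<subseteq> U' \<and> lifts_compacts X Y F (\<lambda>_. True) C V"
    by blast
next
  fix U V y \<W>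
  assume V: "openin Y V" "y \<in> V" and opn: "\<forall>W\<in>\<W>. openin X W"
    and "\<exists>C. closedin X C \<and> C \<subseteq> U \<and> lifts_compacts X Y F (\<lambda>_. True) C V"
    and cov: "\<Union>{K. compactin X K \<and> y \<in> F K \<and> K \<subseteq> U} \<subseteq> \<Union>\<W>"
  then obtain C where C: "closedin X C" "C \<subseteq> U" "lifts_compacts X Y F (\<lambda>_. True) C V"
    by blast
  have "\<Union>{K. compactin X K \<and> y \<in> F K \<and> K \<subseteq> C} \<subseteq> \<Union>\<W>"
    using cov C(2) by blast
  then obtain \<E> T C' where "finite \<E>" "\<E> \<subseteq> \<W>" "openin Y T" "y \<in> T" "closedin X C'" "C' \<subseteq> \<Union>\<E>"
    "lifts_compacts X Y F (\<lambda>_. True) C' T"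
    by (rule Lindelof_lift_refinement[OF regX LX regY mu q mono C(1) V C(3) opn]) (rule that)
  then show "\<exists>\<E> V'. finite \<E> \<and> \<E> \<subseteq> \<W> \<and> openin Y V' \<and> y \<in> V' \<and>
      (\<exists>C. closedin X C \<and> C \<subseteq> \<Union>\<E> \<and> lifts_compacts X Y F (\<lambda>_. True) C V')"
    by blast
qed

section \<open>Separable metrizable domain, first countable range\<close>

lemma cond3c_if_second_countable_first_countable:
  assumes X: "second_countable X" and Y: "first_countable Y"
  shows "cond3c X Y F"
  unfolding cond3c_def lifts_compacts_def[symmetric]
proof (intro allI impI)
  fix U V \<W> y
  assume "openin X U \<and> U \<noteq> {} \<and> openin Y V \<and> V \<noteq> {} \<and> lifts_compacts X Y F countable U V"
    and "(\<forall>W\<in>\<W>. openin X W) \<and> U \<subseteq> \<Union>\<W> \<and> y \<in> V"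
  then have V: "openin Y V" "y \<in> V" and lift: "lifts_compacts X Y F countable U V"
    and opn: "\<forall>W\<in>\<W>. openin X W" and cov: "U \<subseteq> \<Union>\<W>"
    by auto
  obtain \<V> where \<V>: "countable \<V>" "\<V> \<subseteq> \<W>" "U \<subseteq> \<Union>\<V>"
    by (rule second_countable_countable_subcover[OF X opn cov]) (rule that)
  have \<V>_open: "\<forall>V\<in>\<V>. openin X V"
    using \<V>(2) opn by blast
  obtain \<F> :: "nat \<Rightarrow> 'a set set" where \<F>: "\<And>n. finite (\<F> n)" "\<And>n. \<F> n \<subseteq> \<V>"
    and exhaust: "\<And>K. \<lbrakk>compactin X K; K \<subseteq> U\<rbrakk> \<Longrightarrow> \<exists>n. K \<subseteq> \<Union>(\<F> n)"
    by (rule countable_open_cover_exhausts_compacts[OF \<V>(1) \<V>_open \<V>(3)]) (rule that)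
  obtain T :: "nat \<Rightarrow> 'b set" where T: "\<And>n. openin Y (T n)" "\<And>n. y \<in> T n"
    and converge: "\<forall>Ls. (\<forall>n. compactin Y (Ls n) \<and> Ls n \<subseteq> T n) \<longrightarrow>
      compactin Y (insert y (\<Union>(range Ls))) \<and> insert y (\<Union>(range Ls)) \<subseteq> V"
    by (rule first_countable_nbhd_sequence[OF Y V]) (rule that)
  have "\<exists>n. lifts_compacts X Y F countable (\<Union>(\<F> n)) (T n)"
  proof (rule lifts_compacts_at_some_stage[OF lift _ exhaust])
    fix Ls :: "nat \<Rightarrow> 'b set"
    assume Ls: "\<And>n. compactin Y (Ls n) \<and> countable (Ls n) \<and> Ls n \<subseteq> T n"
    then have "\<forall>n. compactin Y (Ls n) \<and> Ls n \<subseteq> T n"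
      by blast
    then have "compactin Y (insert y (\<Union>(range Ls))) \<and> insert y (\<Union>(range Ls)) \<subseteq> V"
      by (rule mp[OF spec[OF converge]])
    moreover have "countable (insert y (\<Union>(range Ls)))"
      using Ls by simp
    ultimately show "\<exists>L. compactin Y L \<and> countable L \<and> L \<subseteq> V \<and> (\<forall>n. Ls n \<subseteq> L)"
      by blast
  qed
  then obtain n where "lifts_compacts X Y F countable (\<Union>(\<F> n)) (T n)"
    by blast
  moreover have "nbhd_of Y (T n) y"
    unfolding nbhd_of_def using T(1,2)[of n] openin_subset[OF T(1)[of n]] by blast
  moreover have "finite (\<F> n)" "\<F> n \<subseteq> \<W>"
    using \<F>(1,2)[of n] \<V>(2) by auto
  ultimately show "\<exists>\<E> Vy. finite \<E> \<and> \<E> \<subseteq> \<W> \<and> nbhd_of Y Vy y \<and> lifts_compacts X Y F countable (\<Union>\<E>) Vy"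
    by blast
qed

lemma lifts_compacts_Union_fibre:
  assumes lift: "lifts_compacts X Y F Q U V" and y: "y \<in> V" "V \<subseteq> topspace Y"
    and Q: "\<And>L. Q L \<Longrightarrow> Q (insert y L)"
  shows "lifts_compacts X Y F Q (\<Union>{K. compactin X K \<and> y \<in> F K \<and> K \<subseteq> U}) V"
  unfolding lifts_compacts_def
proof (intro allI impI)
  fix L assume L: "compactin Y L \<and> Q L \<and> L \<subseteq> V"
  have "y \<in> topspace Y"
    using y by blast
  then have "compactin Y (insert y L)"
    using compactin_Un[of Y "{y}" L] L by simp
  moreover have "Q (insert y L)" "insert y L \<subseteq> V"
    using L Q y(1) by auto
  ultimately have "\<exists>K. compactin X K \<and> K \<subseteq> U \<and> insert y L \<subseteq> F K"
    by (rule lifts_compactsD[OF lift])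
  then show "\<exists>K. compactin X K \<and> K \<subseteq> \<Union>{K. compactin X K \<and> y \<in> F K \<and> K \<subseteq> U} \<and> L \<subseteq> F K"
    by blast
qed

lemma cond3c_lift_refinement:
  assumes c3: "cond3c X Y F" and U: "openin X U" and V: "openin Y V" "y \<in> V"
    and lift: "lifts_compacts X Y F countable U V"
    and opn: "\<forall>W\<in>\<W>. openin X W"
    and cov: "\<Union>{K. compactin X K \<and> y \<in> F K \<and> K \<subseteq> U} \<subseteq> \<Union>\<W>"
  shows "\<exists>\<E> V'. finite \<E> \<and> \<E> \<subseteq> \<W> \<and> openin Y V' \<and> y \<in> V' \<and> lifts_compacts X Y F countable (\<Union>\<E>) V'"
proof -
  define U' where "U' = U \<inter> \<Union>\<W>"
  have "lifts_compacts X Y F countable (\<Union>{K. compactin X K \<and> y \<in> F K \<and> K \<subseteq> U}) V"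
    using lifts_compacts_Union_fibre[OF lift V(2) openin_subset[OF V(1)]] by simp
  moreover have "\<Union>{K. compactin X K \<and> y \<in> F K \<and> K \<subseteq> U} \<subseteq> U'"
    using cov unfolding U'_def by blast
  ultimately have lift': "lifts_compacts X Y F countable U' V"
    using lifts_compacts_mono by blast
  show ?thesis
  proof (cases "U' = {}")
    case True
    then have "lifts_compacts X Y F countable (\<Union>{}) V"
      using lift' by simp
    then show ?thesis
      using V by blast
  next
    case False
    have "openin X U'"
      unfolding U'_def using U opn by blast
    then have "openin X U' \<and> U' \<noteq> {} \<and> openin Y V \<and> V \<noteq> {} \<and> lifts_compacts X Y F countable U' V"
      using False V lift' by blast
    moreover have "(\<forall>W\<in>\<W>. openin X W) \<and> U' \<subseteq> \<Union>\<W> \<and> y \<in> V"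
      using opn V(2) unfolding U'_def by blast
    ultimately have "\<exists>\<E> Vy. finite \<E> \<and> \<E> \<subseteq> \<W> \<and> nbhd_of Y Vy y \<and>
        lifts_compacts X Y F countable (\<Union>\<E>) Vy"
      by (rule c3[unfolded cond3c_def lifts_compacts_def[symmetric], rule_format])
    then obtain \<E> Vy where \<E>: "finite \<E>" "\<E> \<subseteq> \<W>" "nbhd_of Y Vy y"
      and lift_\<E>: "lifts_compacts X Y F countable (\<Union>\<E>) Vy"
      by blast
    then obtain G where "openin Y G" "y \<in> G" "G \<subseteq> Vy"
      unfolding nbhd_of_def by blast
    moreover have "lifts_compacts X Y F countable (\<Union>\<E>) G"
      using lifts_compacts_mono[OF lift_\<E> order_refl \<open>G \<subseteq> Vy\<close>] .
    ultimately show ?thesis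
      using \<E>(1,2) by blast
  qed
qed

lemma set_tri_quotient_if_cond3c:
  assumes c3: "cond3c X Y F" and c2: "cond2c X Y F"
  shows "set_tri_quotient X Y F"
proof (rule set_tri_quotientI[where P = "lifts_compacts X Y F countable"])
  fix U V y
  assume "lifts_compacts X Y F countable U V" "openin Y V" "y \<in> V"
  then show "\<exists>K. compactin X K \<and> K \<subseteq> U \<and> y \<in> F K"
    using lifts_compacts_point openin_subset by (metis countable_insert countable_empty)
next
  show "lifts_compacts X Y F countable (topspace X) (topspace Y)"
    using c2 unfolding cond2c_def by (rule lifts_compacts_topspace)
next
  fix U U' V
  assume "lifts_compacts X Y F countable U V" "U \<subseteq> U'"
  then show "lifts_compacts X Y F countable U' V"
    using lifts_compacts_mono by blast
next
  fix U V y \<W>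
  assume "openin X U" "openin Y V" "y \<in> V" "lifts_compacts X Y F countable U V"
    "\<forall>W\<in>\<W>. openin X W" "\<Union>{K. compactin X K \<and> y \<in> F K \<and> K \<subseteq> U} \<subseteq> \<Union>\<W>"
  then show "\<exists>\<E> V'. finite \<E> \<and> \<E> \<subseteq> \<W> \<and> openin Y V' \<and> y \<in> V' \<and> lifts_compacts X Y F countable (\<Union>\<E>) V'"
    by (rule cond3c_lift_refinement[OF c3])
qed

theorem proposition2p2:
  fixes X :: "'a topology" and Y :: "'b topology" and F :: "'a set \<Rightarrow> 'b set"
  assumes "tychonoff_space X" and "tychonoff_space Y"
    and "maps_compacts X Y F"
  shows "(monotone_K X F \<and> cond2 X Y F \<and> Lindelof_space X \<and> mu_complete Y \<and> q_space Y
            \<longrightarrow> monotone_K X F \<and> set_tri_quotient X Y F)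
       \<and> (separable_space X \<and> metrizable_space X \<and> first_countable Y
            \<longrightarrow> cond3c X Y F \<and>
                (monotone_K X F \<and> cond2c X Y F \<longrightarrow> monotone_K X F \<and> set_tri_quotient X Y F))"
proof (intro conjI impI)
  have regular: "regular_space X" "regular_space Y"
    using assms(1,2) completely_regular_imp_regular_space unfolding tychonoff_space_def by blast+
  assume "monotone_K X F \<and> cond2 X Y F \<and> Lindelof_space X \<and> mu_complete Y \<and> q_space Y"
  then show "monotone_K X F" "set_tri_quotient X Y F"
    using set_tri_quotient_if_Lindelof_q_space[OF regular] by blast+
next
  assume "separable_space X \<and> metrizable_space X \<and> first_countable Y"
  then show c3: "cond3c X Y F"
    using cond3c_if_second_countable_first_countable separable_metrizable_imp_second_countable
    by blast
  {
    assume "monotone_K X F \<and> cond2c X Y F"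
    then show "monotone_K X F" "set_tri_quotient X Y F"
      using set_tri_quotient_if_cond3c[OF c3] by blast+
  }
qed

end
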